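(* Let $\mathcal H_A,\mathcal H_B$ be finite-dimensional complex Hilbert spaces and let $\rho$ be a separable density matrix on $\mathcal H_A\otimes\mathcal H_B$. Let $\rho^{T_B}=(\mathbf 1_A\otimes T)\rho$, where $T$ is transposition in a chosen basis of $\mathcal H_B$. Then $\mathcal L_{\mathcal E}(\rho)=\mathcal L_{\mathcal E}(\rho^{T_B})$.
   Context: $\rho$ is separable if $\rho=\sum_i p_i\,|\psi_i\rangle\langle\psi_i|\otimes|\phi_i\rangle\langle\phi_i|$ with $p_i>0$ and unit vectors $\psi_i\in\mathcal H_A,\phi_i\in\mathcal H_B$ (a separable decomposition). For a separable $\rho$, the optimal ensemble cardinality $\mathcal L_{\mathcal E}(\rho)$ is the least number of distinct pure product states needed in a separable decomposition of $\rho$. *)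

theory Defs
  imports "HOL-Analysis.Analysis"
begin

text \<open>H_A = C^'a, H_B = C^'b with finite index types 'a, 'b (standard bases);
H_A (x) H_B = C^('a \<times> 'b). Operators on it are matrices indexed by pairs.\<close>

type_synonym ('a, 'b) bop = "complex ^ ('a \<times> 'b) ^ ('a \<times> 'b)"

definition unit_vec :: "complex ^ 'n::finite \<Rightarrow> bool" where
  "unit_vec v \<longleftrightarrow> (\<Sum>i\<in>UNIV. (cmod (v $ i))\<^sup>2) = 1"

text \<open>The operator |psi><psi| (x) |phi><phi|.\<close>
definition prod_proj :: "complex ^ 'a::finite \<Rightarrow> complex ^ 'b::finite \<Rightarrow> ('a, 'b) bop" where
  "prod_proj \<psi> \<phi> = (\<chi> x y. \<psi> $ fst x * cnj (\<psi> $ fst y) * \<phi> $ snd x * cnj (\<phi> $ snd y))"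

definition pure_product_states :: "('a::finite, 'b::finite) bop set" where
  "pure_product_states = {prod_proj \<psi> \<phi> | \<psi> \<phi>. unit_vec \<psi> \<and> unit_vec \<phi>}"

definition sep_decomp :: "('a::finite, 'b::finite) bop \<Rightarrow> ('a, 'b) bop set \<Rightarrow> (('a, 'b) bop \<Rightarrow> real) \<Rightarrow> bool" where
  "sep_decomp \<rho> S p \<longleftrightarrow> finite S \<and> S \<subseteq> pure_product_states \<and> (\<forall>s\<in>S. p s > 0)
     \<and> \<rho> = (\<Sum>s\<in>S. p s *\<^sub>R s)"

definition separable :: "('a::finite, 'b::finite) bop \<Rightarrow> bool" where
  "separable \<rho> \<longleftrightarrow> (\<exists>S p. sep_decomp \<rho> S p)"

definition ens_card :: "('a::finite, 'b::finite) bop \<Rightarrow> nat" where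
  "ens_card \<rho> = (LEAST n. \<exists>S p. sep_decomp \<rho> S p \<and> card S = n)"

definition trace_op :: "complex ^ 'n::finite ^ 'n \<Rightarrow> complex" where
  "trace_op M = (\<Sum>i\<in>UNIV. M $ i $ i)"

text \<open>Density matrix: positive semidefinite (over C, hence Hermitian) with trace 1.\<close>
definition density_matrix :: "complex ^ 'n::finite ^ 'n \<Rightarrow> bool" where
  "density_matrix M \<longleftrightarrow> trace_op M = 1 \<and>
     (\<forall>v. let q = (\<Sum>i\<in>UNIV. \<Sum>j\<in>UNIV. cnj (v $ i) * M $ i $ j * v $ j) in Im q = 0 \<and> Re q \<ge> 0)"

definition partial_transpose_B :: "('a::finite, 'b::finite) bop \<Rightarrow> ('a, 'b) bop" where
  "partial_transpose_B \<rho> = (\<chi> x y. \<rho> $ (fst x, snd y) $ (fst y, snd x))"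

end

theory Submission
  imports Defs
begin

text \<open>The partial transpose is a linear involution that maps the pure product state
  \<open>|\<psi>\<rangle>\<langle>\<psi>| \<otimes> |\<phi>\<rangle>\<langle>\<phi>|\<close> to \<open>|\<psi>\<rangle>\<langle>\<psi>| \<otimes> |\<phi>\<^sup>*\<rangle>\<langle>\<phi>\<^sup>*|\<close>, where \<open>\<phi>\<^sup>*\<close> is the entrywise conjugate of \<open>\<phi>\<close>.
  Hence it carries every separable decomposition of \<open>\<rho>\<close> to one of \<open>\<rho>\<^sup>T\<^sup>B\<close> with the same
  number of distinct states, and applying it twice gives the converse.\<close>

lemma partial_transpose_B_involution [simp]:
  "partial_transpose_B (partial_transpose_B \<rho>) = \<rho>"
  by (simp add: partial_transpose_B_def vec_eq_iff)

lemma inj_partial_transpose_B: "inj partial_transpose_B"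
  by (metis partial_transpose_B_involution injI)

lemma partial_transpose_B_sum_scaleR:
  "partial_transpose_B (\<Sum>s\<in>S. p s *\<^sub>R s) = (\<Sum>s\<in>S. p s *\<^sub>R partial_transpose_B s)"
  by (induction S rule: infinite_finite_induct)
     (simp_all add: partial_transpose_B_def vec_eq_iff)

lemma partial_transpose_B_prod_proj:
  "partial_transpose_B (prod_proj \<psi> \<phi>) = prod_proj \<psi> (\<chi> i. cnj (\<phi> $ i))"
  by (simp add: partial_transpose_B_def prod_proj_def vec_eq_iff mult_ac)

lemma unit_vec_cnj: "unit_vec \<phi> \<Longrightarrow> unit_vec (\<chi> i. cnj (\<phi> $ i))"
  by (simp add: unit_vec_def)

lemma partial_transpose_B_pure_product_state:
  "s \<in> pure_product_states \<Longrightarrow> partial_transpose_B s \<in> pure_product_states"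
  unfolding pure_product_states_def
  using partial_transpose_B_prod_proj unit_vec_cnj by blast

lemma sep_decomp_partial_transpose_B:
  assumes "sep_decomp \<rho> S p"
  shows "sep_decomp (partial_transpose_B \<rho>) (partial_transpose_B ` S) (p \<circ> partial_transpose_B)"
proof -
  have inj: "inj_on partial_transpose_B S"
    using inj_partial_transpose_B inj_on_subset by blast
  have "(\<Sum>t\<in>partial_transpose_B ` S. (p \<circ> partial_transpose_B) t *\<^sub>R t)
      = (\<Sum>s\<in>S. p s *\<^sub>R partial_transpose_B s)"
    by (simp add: sum.reindex[OF inj])
  also have "\<dots> = partial_transpose_B \<rho>"
    using assms by (simp add: sep_decomp_def partial_transpose_B_sum_scaleR)
  finally show ?thesis
    using assms partial_transpose_B_pure_product_state unfolding sep_decomp_def by auto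
qed

lemma sep_decomp_card_partial_transpose_B:
  assumes "sep_decomp \<rho> S p"
  shows "\<exists>S' p'. sep_decomp (partial_transpose_B \<rho>) S' p' \<and> card S' = card S"
  using sep_decomp_partial_transpose_B[OF assms]
    card_image[OF inj_on_subset[OF inj_partial_transpose_B]] by blast

lemma ens_card_partial_transpose_B:
  "ens_card (partial_transpose_B \<rho>) = ens_card \<rho>"
proof -
  have "(\<exists>S p. sep_decomp (partial_transpose_B \<rho>) S p \<and> card S = n)
    \<longleftrightarrow> (\<exists>S p. sep_decomp \<rho> S p \<and> card S = n)" for n
    using sep_decomp_card_partial_transpose_B[of \<rho>]
      sep_decomp_card_partial_transpose_B[of "partial_transpose_B \<rho>"] by auto
  then show ?thesis
    unfolding ens_card_def by simp
qed

theorem lemma1: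
  fixes \<rho> :: "('a::finite, 'b::finite) bop"
  assumes "density_matrix \<rho>" and "separable \<rho>"
  shows "ens_card \<rho> = ens_card (partial_transpose_B \<rho>)"
  by (rule ens_card_partial_transpose_B[symmetric])

end
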